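(* For every $n\ge1$ and $k\ge0$, the following identity holds in $\mathbb C[x_1,\dots,x_n]$: $z_{2k}=-\sum_{i=1}^{k}\sigma_{2i}\,z_{2k-2i}+\sigma_{2k+1}$, where $\sigma_p=\sum_{i_1<\dots<i_p}x_{i_1}\cdots x_{i_p}$ is the $p$-th elementary symmetric polynomial ($\sigma_p=0$ for $p>n$).
   Context: $U(\mathfrak h_n)$ is the associative superalgebra generated by odd elements $\xi_1,\dots,\xi_n$ with $\xi_i\xi_j+\xi_j\xi_i=0$ for $i\neq j$; $x_i=\xi_i^2$ are central. Let $T$ be the $\mathbb C[x_1,\dots,x_n]$-linear endomorphism of the free $\mathbb C[x_1,\dots,x_n]$-module with basis $\xi_1,\dots,\xi_n$ given by $T(\xi_j)=\sum_i t_{ij}\xi_i$ with $t_{ii}=0$, $t_{ij}=x_j$ for $i<j$, $t_{ij}=-x_j$ for $i>j$. Put $\phi_0=\sum_i\xi_i$, $\phi_k=T^k(\phi_0)$, and for $k\ge0$ let $z_{2k}=\frac12(\phi_0\phi_{2k}+\phi_{2k}\phi_0)$, which lies in $\mathbb C[x_1,\dots,x_n]$. *)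

theory Defs
  imports Complex_Main "HOL-Library.Poly_Mapping"
begin

text \<open>C[x_1,...,x_n] (indeed C[x_1,x_2,...]) as finitely supported functions from
  monomials (exponent vectors nat =>0 nat) to complex coefficients; this is a comm_ring_1
  with convolution product.\<close>
type_synonym mpoly = "(nat \<Rightarrow>\<^sub>0 nat) \<Rightarrow>\<^sub>0 complex"

definition Xv :: "nat \<Rightarrow> mpoly" where
  "Xv i = Poly_Mapping.single (Poly_Mapping.single i 1) 1"

definition esym :: "nat \<Rightarrow> nat \<Rightarrow> mpoly" where
  "esym n p = (\<Sum>S\<in>{S. S \<subseteq> {1..n} \<and> card S = p}. \<Prod>i\<in>S. Xv i)"

text \<open>Elements of the free C[x]-module with basis xi_1..xi_n, as coefficient functions
  on the index set {1..n}.\<close>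
type_synonym modvec = "nat \<Rightarrow> mpoly"

definition tcoef :: "nat \<Rightarrow> nat \<Rightarrow> mpoly" where
  "tcoef i j = (if i < j then Xv j else if j < i then - Xv j else 0)"

text \<open>T(xi_j) = sum_i t_ij xi_i, extended C[x]-linearly: coefficient of xi_i in T v.\<close>
definition Tmap :: "nat \<Rightarrow> modvec \<Rightarrow> modvec" where
  "Tmap n v = (\<lambda>i. if i \<in> {1..n} then (\<Sum>j=1..n. tcoef i j * v j) else 0)"

definition phi0 :: "nat \<Rightarrow> modvec" where
  "phi0 n = (\<lambda>i. if i \<in> {1..n} then 1 else 0)"

definition phi :: "nat \<Rightarrow> nat \<Rightarrow> modvec" where
  "phi n k = (Tmap n ^^ k) (phi0 n)"

text \<open>For u = sum_i a_i xi_i and v = sum_i b_i xi_i in U(h_n), the defining relations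
  (xi_i xi_j + xi_j xi_i = 0 for i ~= j, xi_i^2 = x_i central) give
  (1/2)(u v + v u) = sum_i a_i b_i x_i.\<close>
definition half_anticomm :: "nat \<Rightarrow> modvec \<Rightarrow> modvec \<Rightarrow> mpoly" where
  "half_anticomm n u v = (\<Sum>i=1..n. u i * v i * Xv i)"

definition zz :: "nat \<Rightarrow> nat \<Rightarrow> mpoly" where
  "zz n m = half_anticomm n (phi n 0) (phi n m)"

end

theory Submission
  imports Defs "HOL-Computational_Algebra.Polynomial"
begin

text \<open>Put y_j = x_j t and W_i = prod_{j<i} (1 - y_j) prod_{j>i} (1 + y_j). Since
  W_i (1 - y_i) = W_{i+1} (1 + y_{i+1}), the vector W - T_y W is constant, where T_y is T with
  x replaced by y. Comparing its entries at i = 1 and i = n shows that this constant is the even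
  part of prod_j (1 + y_j), and that sum_j y_j W_j is the odd part. Taking coefficients of t^d,
  the coefficient vectors u_d of W satisfy u_{d+1} = T u_d + [d+1 even] sigma_{d+1} phi_0, hence
  u_d = sum_l [l even] sigma_l phi_{d-l}; pairing u_{2k} with phi_0 gives
  sigma_{2k+1} = sum_i sigma_{2i} z_{2k-2i}.\<close>

definition mixed_prod :: "(nat \<Rightarrow> 'a::comm_ring_1) \<Rightarrow> nat \<Rightarrow> nat \<Rightarrow> 'a" where
  "mixed_prod y n i = (\<Prod>j\<in>{1..<i}. 1 - y j) * (\<Prod>j\<in>{i<..n}. 1 + y j)"

definition skew_apply :: "(nat \<Rightarrow> 'a::comm_ring_1) \<Rightarrow> nat \<Rightarrow> (nat \<Rightarrow> 'a) \<Rightarrow> nat \<Rightarrow> 'a" where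
  "skew_apply y n v i = (\<Sum>j\<in>{i<..n}. y j * v j) - (\<Sum>j\<in>{1..<i}. y j * v j)"

definition mixed_residue :: "(nat \<Rightarrow> 'a::comm_ring_1) \<Rightarrow> nat \<Rightarrow> nat \<Rightarrow> 'a" where
  "mixed_residue y n i = mixed_prod y n i - skew_apply y n (mixed_prod y n) i"

lemma greaterThanAtMost_eq_insert_Suc: "i < n \<Longrightarrow> {i<..n} = insert (Suc i) {Suc i<..n}"
  by auto

lemma mixed_prod_Suc:
  assumes "1 \<le> i" "i < n"
  shows "mixed_prod y n i * (1 - y i) = mixed_prod y n (Suc i) * (1 + y (Suc i))"
  using assms
  by (simp add: mixed_prod_def prod.atLeastLessThan_Suc greaterThanAtMost_eq_insert_Suc
      algebra_simps)

lemma skew_apply_Suc: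
  assumes "1 \<le> i" "i < n"
  shows "skew_apply y n v i = skew_apply y n v (Suc i) + y i * v i + y (Suc i) * v (Suc i)"
  using assms
  by (simp add: skew_apply_def sum.atLeastLessThan_Suc greaterThanAtMost_eq_insert_Suc
      algebra_simps)

lemma mixed_residue_Suc:
  assumes "1 \<le> i" "i < n"
  shows "mixed_residue y n (Suc i) = mixed_residue y n i"
  using mixed_prod_Suc[OF assms, of y] skew_apply_Suc[OF assms, of y "mixed_prod y n"]
  by (simp add: mixed_residue_def algebra_simps)

lemma mixed_residue_const:
  assumes "1 \<le> i" "i \<le> n"
  shows "mixed_residue y n i = mixed_residue y n 1"
  using assms
proof (induction i rule: dec_induct)
  case (step m)
  then show ?case using mixed_residue_Suc[of m n y] by simp
qed simp

lemma mixed_residue_first: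
  assumes "1 \<le> n"
  shows "mixed_residue y n 1 = (\<Prod>j\<in>{1..n}. 1 + y j) - (\<Sum>j\<in>{1..n}. y j * mixed_prod y n j)"
proof -
  have split: "{1..n} = insert 1 {1<..n}" using assms by auto
  show ?thesis
    unfolding mixed_residue_def skew_apply_def split
    by (simp add: mixed_prod_def algebra_simps)
qed

lemma mixed_residue_last:
  assumes "1 \<le> n"
  shows "mixed_residue y n n = (\<Prod>j\<in>{1..n}. 1 - y j) + (\<Sum>j\<in>{1..n}. y j * mixed_prod y n j)"
proof -
  have split: "{1..n} = insert n {1..<n}" using assms by auto
  show ?thesis
    unfolding mixed_residue_def skew_apply_def split
    by (simp add: mixed_prod_def algebra_simps)
qed

lemma mixed_residue_double:
  assumes "1 \<le> n"
  shows "mixed_residue y n 1 + mixed_residue y n 1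
    = (\<Prod>j\<in>{1..n}. 1 + y j) + (\<Prod>j\<in>{1..n}. 1 - y j)"
  using mixed_residue_first[OF assms, of y] mixed_residue_last[OF assms, of y]
    mixed_residue_const[of n n y] assms
  by (simp add: algebra_simps)

lemma sum_mixed_prod_double:
  assumes "1 \<le> n"
  shows "(\<Sum>j\<in>{1..n}. y j * mixed_prod y n j) + (\<Sum>j\<in>{1..n}. y j * mixed_prod y n j)
    = (\<Prod>j\<in>{1..n}. 1 + y j) - (\<Prod>j\<in>{1..n}. 1 - y j)"
  using mixed_residue_first[OF assms, of y] mixed_residue_last[OF assms, of y]
    mixed_residue_const[of n n y] assms
  by (simp add: algebra_simps)

lemma prod_monom_1:
  "finite S \<Longrightarrow> (\<Prod>j\<in>S. monom (a j) 1) = monom (\<Prod>j\<in>S. a j) (card S)"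
  by (induction S rule: finite_induct) (simp_all add: mult_monom)

lemma coeff_prod_one_plus_monom:
  fixes a :: "nat \<Rightarrow> 'a::comm_ring_1"
  assumes "finite A"
  shows "coeff (\<Prod>j\<in>A. 1 + monom (a j) 1) d = (\<Sum>S\<in>{S. S \<subseteq> A \<and> card S = d}. \<Prod>j\<in>S. a j)"
proof -
  have "(\<Prod>j\<in>A. 1 + monom (a j) 1) = (\<Sum>S\<in>Pow A. (\<Prod>j\<in>S. monom (a j) 1) * (\<Prod>j\<in>A-S. 1))"
    using prod_add[OF assms, of "\<lambda>j. monom (a j) 1" "\<lambda>_. 1"] by (simp add: add.commute)
  also have "\<dots> = (\<Sum>S\<in>Pow A. monom (\<Prod>j\<in>S. a j) (card S))"
  proof (intro sum.cong refl)
    fix S assume "S \<in> Pow A"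
    with assms have "finite S" by (auto dest: finite_subset)
    then show "(\<Prod>j\<in>S. monom (a j) 1) * (\<Prod>j\<in>A-S. 1) = monom (\<Prod>j\<in>S. a j) (card S)"
      by (simp only: prod_monom_1 prod.neutral_const mult_1_right)
  qed
  finally have "coeff (\<Prod>j\<in>A. 1 + monom (a j) 1) d
      = (\<Sum>S\<in>Pow A. if card S = d then \<Prod>j\<in>S. a j else 0)"
    by (simp add: coeff_sum)
  also have "\<dots> = (\<Sum>S\<in>{S\<in>Pow A. card S = d}. \<Prod>j\<in>S. a j)"
    using assms by (intro sum.inter_filter[symmetric]) simp
  also have "{S\<in>Pow A. card S = d} = {S. S \<subseteq> A \<and> card S = d}" by auto
  finally show ?thesis .
qed

lemma coeff_skew_apply_monom:
  "coeff (skew_apply (\<lambda>j. monom (x j) 1) n v i) (Suc d) = skew_apply x n (\<lambda>j. coeff (v j) d) i"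
  by (simp add: skew_apply_def coeff_sum coeff_monom_mult)

lemma poly_mapping_double_cancel:
  fixes a b :: "'a \<Rightarrow>\<^sub>0 'b::field_char_0"
  assumes "a + a = b + b"
  shows "a = b"
proof (rule poly_mapping_eqI)
  fix k :: 'a
  from assms have "Poly_Mapping.lookup (a + a) k = Poly_Mapping.lookup (b + b) k" by simp
  then have "2 * Poly_Mapping.lookup a k = 2 * Poly_Mapping.lookup b k"
    by (simp only: lookup_add mult_2)
  then show "Poly_Mapping.lookup a k = Poly_Mapping.lookup b k" by simp
qed

definition Xt :: "nat \<Rightarrow> mpoly poly" where
  "Xt j = monom (Xv j) 1"

lemma coeff_prod_one_plus_Xt: "coeff (\<Prod>j\<in>{1..n}. 1 + Xt j) d = esym n d"
  unfolding Xt_def esym_def by (rule coeff_prod_one_plus_monom) simp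

lemma coeff_prod_one_minus_Xt: "coeff (\<Prod>j\<in>{1..n}. 1 - Xt j) d = (-1)^d * esym n d"
proof -
  have "(\<Prod>j\<in>{1..n}. 1 - Xt j) = (\<Prod>j\<in>{1..n}. 1 + monom (- Xv j) 1)"
    by (simp add: Xt_def minus_monom[symmetric])
  then have "coeff (\<Prod>j\<in>{1..n}. 1 - Xt j) d
      = (\<Sum>S\<in>{S. S \<subseteq> {1..n} \<and> card S = d}. \<Prod>j\<in>S. - Xv j)"
    using coeff_prod_one_plus_monom[of "{1..n}" "\<lambda>j. - Xv j" d] by simp
  also have "\<dots> = (\<Sum>S\<in>{S. S \<subseteq> {1..n} \<and> card S = d}. (-1)^d * (\<Prod>j\<in>S. Xv j))"
    by (intro sum.cong refl) (simp add: prod_uminus)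
  finally show ?thesis by (simp add: esym_def sum_distrib_left)
qed

lemma esym_0: "esym n 0 = 1"
proof -
  have "{S. S \<subseteq> {1..n} \<and> card S = 0} = {{}}"
    using finite_subset by fastforce
  then show ?thesis by (simp add: esym_def)
qed

lemma coeff_mixed_residue_Xt:
  assumes "1 \<le> n"
  shows "coeff (mixed_residue Xt n 1) m = (if even m then esym n m else 0)"
proof -
  have "coeff (mixed_residue Xt n 1) m + coeff (mixed_residue Xt n 1) m
      = esym n m + (-1)^m * esym n m"
    using arg_cong[OF mixed_residue_double[OF assms, of Xt], of "\<lambda>p. coeff p m"]
    by (simp only: coeff_add coeff_prod_one_plus_Xt coeff_prod_one_minus_Xt)
  then show ?thesis
    by (cases "even m") (auto intro: poly_mapping_double_cancel)
qed

lemma sum_Xv_coeff_mixed_prod: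
  assumes "1 \<le> n" "even d"
  shows "(\<Sum>j\<in>{1..n}. Xv j * coeff (mixed_prod Xt n j) d) = esym n (Suc d)"
proof -
  let ?c = "coeff (\<Sum>j\<in>{1..n}. Xt j * mixed_prod Xt n j) (Suc d)"
  have "?c + ?c = esym n (Suc d) - (-1)^(Suc d) * esym n (Suc d)"
    using arg_cong[OF sum_mixed_prod_double[OF assms(1), of Xt], of "\<lambda>p. coeff p (Suc d)"]
    by (simp only: coeff_add coeff_diff coeff_prod_one_plus_Xt coeff_prod_one_minus_Xt)
  with assms(2) have "?c = esym n (Suc d)"
    by (auto intro: poly_mapping_double_cancel)
  then show ?thesis by (simp add: coeff_sum Xt_def coeff_monom_mult)
qed

lemma coeff_mixed_prod_Xt_0: "coeff (mixed_prod Xt n i) 0 = 1"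
  by (simp add: mixed_prod_def poly_0_coeff_0[symmetric] poly_prod Xt_def poly_monom)

lemma Tmap_eq_skew_apply:
  assumes "i \<in> {1..n}"
  shows "Tmap n v i = skew_apply Xv n v i"
proof -
  have split: "{1..n} = {1..<i} \<union> insert i {i<..n}" using assms by auto
  have "(\<Sum>j=1..n. tcoef i j * v j)
      = (\<Sum>j\<in>{1..<i}. tcoef i j * v j) + (\<Sum>j\<in>{i<..n}. tcoef i j * v j)"
    unfolding split by (subst sum.union_disjoint) (auto simp: tcoef_def)
  also have "\<dots> = - (\<Sum>j\<in>{1..<i}. Xv j * v j) + (\<Sum>j\<in>{i<..n}. Xv j * v j)"
    by (simp add: tcoef_def sum_negf[symmetric])
  finally show ?thesis using assms by (simp add: Tmap_def skew_apply_def)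
qed

lemma Tmap_sum_scale:
  "Tmap n (\<lambda>i. \<Sum>l\<in>L. a l * v l i) = (\<lambda>i. \<Sum>l\<in>L. a l * Tmap n (v l) i)"
  by (auto simp: Tmap_def sum_distrib_left mult.left_commute intro!: ext sum.swap[THEN trans])

lemma Tmap_recurrence_solution:
  assumes base: "u 0 = (\<lambda>i. e 0 * phi0 n i)"
    and step: "\<And>d. u (Suc d) = (\<lambda>i. Tmap n (u d) i + e (Suc d) * phi0 n i)"
  shows "u d = (\<lambda>i. \<Sum>l\<le>d. e l * phi n (d - l) i)"
proof (induction d)
  case 0
  show ?case by (simp add: base phi_def)
next
  case (Suc d)
  have "Tmap n (u d) = (\<lambda>i. \<Sum>l\<le>d. e l * phi n (Suc d - l) i)"
    by (simp add: Suc Tmap_sum_scale phi_def Suc_diff_le)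
  then show ?case by (simp add: step phi_def)
qed

definition mixed_prod_coeffs :: "nat \<Rightarrow> nat \<Rightarrow> modvec" where
  "mixed_prod_coeffs n d = (\<lambda>i. if i \<in> {1..n} then coeff (mixed_prod Xt n i) d else 0)"

lemma mixed_prod_coeffs_Suc:
  assumes "1 \<le> n"
  shows "mixed_prod_coeffs n (Suc d) = (\<lambda>i. Tmap n (mixed_prod_coeffs n d) i
    + (if even (Suc d) then esym n (Suc d) else 0) * phi0 n i)"
proof
  fix i
  show "mixed_prod_coeffs n (Suc d) i = Tmap n (mixed_prod_coeffs n d) i
    + (if even (Suc d) then esym n (Suc d) else 0) * phi0 n i"
  proof (cases "i \<in> {1..n}")
    case True
    have "skew_apply Xv n (\<lambda>j. coeff (mixed_prod Xt n j) d) i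
        = skew_apply Xv n (mixed_prod_coeffs n d) i"
      using True unfolding skew_apply_def mixed_prod_coeffs_def
      by (intro arg_cong2[where f = minus] sum.cong) auto
    then have "coeff (skew_apply Xt n (mixed_prod Xt n) i) (Suc d)
        = Tmap n (mixed_prod_coeffs n d) i"
      using True coeff_skew_apply_monom[of Xv n "mixed_prod Xt n" i d]
      by (simp add: Xt_def[abs_def] Tmap_eq_skew_apply)
    moreover have "coeff (mixed_residue Xt n i) (Suc d)
        = (if even (Suc d) then esym n (Suc d) else 0)"
      using True mixed_residue_const[of i n Xt] coeff_mixed_residue_Xt[OF assms] by simp
    ultimately show ?thesis
      using True by (simp add: mixed_residue_def mixed_prod_coeffs_def phi0_def algebra_simps)
  qed (auto simp: mixed_prod_coeffs_def Tmap_def phi0_def)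
qed

lemma mixed_prod_coeffs_eq_sum_phi:
  assumes "1 \<le> n"
  shows "mixed_prod_coeffs n d = (\<lambda>i. \<Sum>l\<le>d. (if even l then esym n l else 0) * phi n (d - l) i)"
proof (rule Tmap_recurrence_solution)
  show "mixed_prod_coeffs n 0 = (\<lambda>i. (if even 0 then esym n 0 else 0) * phi0 n i)"
    by (auto simp: mixed_prod_coeffs_def coeff_mixed_prod_Xt_0 esym_0 phi0_def)
qed (rule mixed_prod_coeffs_Suc[OF assms])

lemma zz_eq_sum_phi: "zz n m = (\<Sum>j=1..n. Xv j * phi n m j)"
  unfolding zz_def half_anticomm_def
  by (intro sum.cong refl) (simp add: phi_def phi0_def)

lemma sum_atMost_double_even:
  fixes f :: "nat \<Rightarrow> 'a::comm_monoid_add"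
  shows "(\<Sum>l\<le>2*k. if even l then f l else 0) = (\<Sum>i\<le>k. f (2*i))"
  by (induction k) (simp_all add: add.assoc)

lemma esym_odd_eq_sum_zz:
  assumes "1 \<le> n"
  shows "esym n (2*k+1) = (\<Sum>i\<le>k. esym n (2*i) * zz n (2*k - 2*i))"
proof -
  have "esym n (2*k+1) = (\<Sum>j\<in>{1..n}. Xv j * mixed_prod_coeffs n (2*k) j)"
    using sum_Xv_coeff_mixed_prod[OF assms, of "2*k"] by (simp add: mixed_prod_coeffs_def)
  also have "\<dots> = (\<Sum>l\<le>2*k. (if even l then esym n l else 0) * zz n (2*k - l))"
    unfolding mixed_prod_coeffs_eq_sum_phi[OF assms] zz_eq_sum_phi sum_distrib_left
    by (subst sum.swap) (simp add: mult.left_commute)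
  also have "\<dots> = (\<Sum>l\<le>2*k. if even l then esym n l * zz n (2*k - l) else 0)"
    by (intro sum.cong refl) simp
  also have "\<dots> = (\<Sum>i\<le>k. esym n (2*i) * zz n (2*k - 2*i))"
    by (rule sum_atMost_double_even)
  finally show ?thesis .
qed

theorem lemma5p4:
  fixes n k :: nat
  assumes "n \<ge> 1"
  shows "zz n (2*k) = - (\<Sum>i=1..k. esym n (2*i) * zz n (2*k - 2*i)) + esym n (2*k+1)"
proof -
  have "{..k} = insert 0 {1..k}" by auto
  then have "esym n (2*k+1) = zz n (2*k) + (\<Sum>i=1..k. esym n (2*i) * zz n (2*k - 2*i))"
    using esym_odd_eq_sum_zz[OF assms] by (simp add: esym_0)
  then show ?thesis by simp
qed

end
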